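(* Let $\mathcal C$ be a Clifford circuit on $n$ qubits of depth $\Delta$. The accumulator $F\mapsto\overrightarrow F$ and the back-accumulator $F\mapsto\overleftarrow F$ are group automorphisms of $\overline{\mathcal P}_{n(\Delta+1)}$.
   Context: A Clifford circuit on $n$ qubits is a finite sequence of operations, each a unitary Clifford gate or a Pauli measurement, each with a level in $\{1,2,\dots\}$, operations of equal level having disjoint supports; the depth $\Delta$ is the maximal level. $\overline{\mathcal P}_N$ is the $N$-qubit Pauli group modulo the phases $\{\pm1,\pm i\}$. For $1\le\ell\le\Delta$, $U_\ell$ is the product of all unitary gates of level $\ell$ (identity if none). A fault operator $F\in\overline{\mathcal P}_{n(\Delta+1)}$ acts on qubits $(\ell+0.5,q)$, $0\le\ell\le\Delta$, $1\le q\le n$; $F_{\ell+0.5}\in\overline{\mathcal P}_n$ is its component on level $\ell+0.5$. Cumulant $\overrightarrow F$: start with $\overrightarrow F=F$; for $\ell=1,\dots,\Delta$ in increasing order replace $\overrightarrow F_{\ell+0.5}$ by $\overrightarrow F_{\ell+0.5}\cdot U_\ell\overrightarrow F_{\ell-0.5}U_\ell^{-1}$. Back-cumulant $\overleftarrow F$: start with $\overleftarrow F=F$; for $\ell=\Delta,\dots,1$ in decreasing order replace $\overleftarrow F_{\ell-0.5}$ by $\overleftarrow F_{\ell-0.5}\cdot U_\ell^{-1}\overleftarrow F_{\ell+0.5}U_\ell$. *)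

theory Defs
  imports "Jordan_Normal_Form.Schur_Decomposition" "HOL-Algebra.Group"
begin

datatype pauli1 = PI | PX | PY | PZ

text \<open>Matrix entries (row bit, column bit) of the single-qubit Pauli matrices;
  False = basis state 0, True = basis state 1.\<close>
fun pmat :: "pauli1 \<Rightarrow> bool \<Rightarrow> bool \<Rightarrow> complex" where
  "pmat PI r c = (if r = c then 1 else 0)"
| "pmat PX r c = (if r \<noteq> c then 1 else 0)"
| "pmat PY r c = (if r = c then 0 else if r then \<i> else - \<i>)"
| "pmat PZ r c = (if r = c then (if r then -1 else 1) else 0)"

fun pmul1 :: "pauli1 \<Rightarrow> pauli1 \<Rightarrow> pauli1" where
  "pmul1 PI b = b"
| "pmul1 a PI = a"
| "pmul1 PX PX = PI" | "pmul1 PY PY = PI" | "pmul1 PZ PZ = PI"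
| "pmul1 PX PY = PZ" | "pmul1 PY PX = PZ"
| "pmul1 PY PZ = PX" | "pmul1 PZ PY = PX"
| "pmul1 PZ PX = PY" | "pmul1 PX PZ = PY"

text \<open>A Pauli string on n qubits is a function from qubit indices (0..n-1) to pauli1;
  its matrix is the tensor product, acting on C^(2^n) with qubit q = bit q of the index.\<close>
definition pauli_mat :: "nat \<Rightarrow> (nat \<Rightarrow> pauli1) \<Rightarrow> complex mat" where
  "pauli_mat n p = mat (2^n) (2^n) (\<lambda>(r, c). \<Prod>q<n. pmat (p q) (bit r q) (bit c q))"

definition clifford :: "nat \<Rightarrow> complex mat \<Rightarrow> bool" where
  "clifford n U \<longleftrightarrow> U \<in> carrier_mat (2^n) (2^n)
     \<and> U * mat_adjoint U = 1\<^sub>m (2^n) \<and> mat_adjoint U * U = 1\<^sub>m (2^n)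
     \<and> (\<forall>p. \<exists>c p'. U * pauli_mat n p * mat_adjoint U = c \<cdot>\<^sub>m pauli_mat n p')"

definition conj_pauli :: "nat \<Rightarrow> complex mat \<Rightarrow> complex mat \<Rightarrow> (nat \<Rightarrow> pauli1) \<Rightarrow> (nat \<Rightarrow> pauli1)" where
  "conj_pauli n A B p = (SOME p'. (\<forall>q\<ge>n. p' q = PI) \<and>
      (\<exists>c. A * pauli_mat n p * B = c \<cdot>\<^sub>m pauli_mat n p'))"

text \<open>F l q is the component of F on qubit (l+0.5, q), 0 \<le> l \<le> Delta, 0 \<le> q < n;
  canonical representatives are PI outside that range.\<close>
definition fault_group :: "nat \<Rightarrow> nat \<Rightarrow> (nat \<Rightarrow> nat \<Rightarrow> pauli1) monoid" where
  "fault_group n \<Delta> = \<lparr> carrier = {F. \<forall>l q. (\<Delta> < l \<or> n \<le> q) \<longrightarrow> F l q = PI},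
      monoid.mult = (\<lambda>F G l q. pmul1 (F l q) (G l q)),
      monoid.one = (\<lambda>l q. PI) \<rparr>"

text \<open>U l is the unitary of level l (1 \<le> l \<le> Delta); its inverse is its adjoint.
  cumulant_steps k = result after processing levels 1..k.\<close>
fun cumulant_steps :: "nat \<Rightarrow> (nat \<Rightarrow> complex mat) \<Rightarrow> (nat \<Rightarrow> nat \<Rightarrow> pauli1) \<Rightarrow> nat \<Rightarrow> (nat \<Rightarrow> nat \<Rightarrow> pauli1)" where
  "cumulant_steps n U F 0 = F"
| "cumulant_steps n U F (Suc k) =
     (let G = cumulant_steps n U F k
      in G(Suc k := (\<lambda>q. pmul1 (G (Suc k) q)
                          (conj_pauli n (U (Suc k)) (mat_adjoint (U (Suc k))) (G k) q))))"

definition cumulant :: "nat \<Rightarrow> nat \<Rightarrow> (nat \<Rightarrow> complex mat) \<Rightarrow> (nat \<Rightarrow> nat \<Rightarrow> pauli1) \<Rightarrow> (nat \<Rightarrow> nat \<Rightarrow> pauli1)" where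
  "cumulant n \<Delta> U F = cumulant_steps n U F \<Delta>"

text \<open>back_steps k = result after processing levels Delta, Delta-1, ..., Delta-k+1.\<close>
fun back_steps :: "nat \<Rightarrow> nat \<Rightarrow> (nat \<Rightarrow> complex mat) \<Rightarrow> (nat \<Rightarrow> nat \<Rightarrow> pauli1) \<Rightarrow> nat \<Rightarrow> (nat \<Rightarrow> nat \<Rightarrow> pauli1)" where
  "back_steps n \<Delta> U F 0 = F"
| "back_steps n \<Delta> U F (Suc k) =
     (let G = back_steps n \<Delta> U F k; l = \<Delta> - k
      in G(l - 1 := (\<lambda>q. pmul1 (G (l - 1) q)
                          (conj_pauli n (mat_adjoint (U l)) (U l) (G l) q))))"

definition back_cumulant :: "nat \<Rightarrow> nat \<Rightarrow> (nat \<Rightarrow> complex mat) \<Rightarrow> (nat \<Rightarrow> nat \<Rightarrow> pauli1) \<Rightarrow> (nat \<Rightarrow> nat \<Rightarrow> pauli1)" where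
  "back_cumulant n \<Delta> U F = back_steps n \<Delta> U F \<Delta>"

end

theory Submission
  imports Defs
begin

text \<open>Paulis modulo phases form an elementary abelian 2-group, and conjugation by a Clifford
  unitary or by its inverse induces an endomorphism \<phi> of it. Each level of the cumulant and of
  the back-cumulant replaces one layer G_i of a fault operator by G_i \<phi>(G_j) for another
  layer j \<noteq> i. Such a transvection is a homomorphism because the group is abelian and \<phi> is a
  homomorphism, and it is its own inverse because every element squares to the identity. Both
  maps are compositions of such transvections.\<close>

lemma pmul1_assoc: "pmul1 (pmul1 a b) c = pmul1 a (pmul1 b c)"
  by (cases a; cases b; cases c; simp)

lemma pmul1_self [simp]: "pmul1 a a = PI"
  by (cases a; simp)

lemma pmul1_PI_right [simp]: "pmul1 a PI = a"
  by (cases a; simp)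

lemma pmul1_cancel_right [simp]: "pmul1 (pmul1 a b) b = a"
  by (simp add: pmul1_assoc)

lemma pmul1_eq_PI_iff: "pmul1 a b = PI \<longleftrightarrow> a = b"
  by (cases a; cases b; simp)

lemma pmul1_exchange: "pmul1 (pmul1 a b) (pmul1 c d) = pmul1 (pmul1 a c) (pmul1 b d)"
  by (cases a; cases b; cases c; cases d; simp)

fun pauli_phase :: "pauli1 \<Rightarrow> pauli1 \<Rightarrow> complex" where
  "pauli_phase PX PY = \<i>" | "pauli_phase PY PX = - \<i>"
| "pauli_phase PY PZ = \<i>" | "pauli_phase PZ PY = - \<i>"
| "pauli_phase PZ PX = \<i>" | "pauli_phase PX PZ = - \<i>"
| "pauli_phase _ _ = 1"

lemma pauli_phase_nonzero [simp]: "pauli_phase a b \<noteq> 0"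
  by (cases a; cases b; simp)

lemma pauli_phase_self [simp]: "pauli_phase a a = 1"
  by (cases a; simp)

lemma pmat_mult:
  "pmat a r False * pmat b False s + pmat a r True * pmat b True s
     = pauli_phase a b * pmat (pmul1 a b) r s"
  by (cases a; cases b; cases r; cases s; simp)

lemma pmat_trace_eq_0_iff: "pmat a False False + pmat a True True = 0 \<longleftrightarrow> a \<noteq> PI"
  by (cases a; simp)

lemma sum_lessThan_double:
  fixes f :: "nat \<Rightarrow> 'a::comm_monoid_add"
  shows "(\<Sum>k<2 * N. f k) = (\<Sum>m<N. f (2 * m) + f (2 * m + 1))"
proof (induction N)
  case (Suc N)
  have "{..<2 * Suc N} = insert (2 * N + 1) (insert (2 * N) {..<2 * N})" by auto
  then show ?case using Suc by (simp add: algebra_simps)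
qed simp

lemma sum_bits_prod:
  fixes g :: "nat \<Rightarrow> bool \<Rightarrow> 'a::comm_semiring_1"
  shows "(\<Sum>k<2^n. \<Prod>j<n. g j (bit (k::nat) j)) = (\<Prod>j<n. g j False + g j True)"
proof (induction n arbitrary: g)
  case (Suc n)
  have "(\<Sum>k<2^Suc n. \<Prod>j<Suc n. g j (bit (k::nat) j))
      = (\<Sum>k<2 * 2^n. g 0 (odd (k::nat)) * (\<Prod>j<n. g (Suc j) (bit (k div 2) j)))"
    by (simp add: prod.lessThan_Suc_shift bit_0 bit_Suc del: prod.lessThan_Suc)
  also have "\<dots> = (\<Sum>m<2^n. (g 0 False + g 0 True) * (\<Prod>j<n. g (Suc j) (bit (m::nat) j)))"
    by (subst sum_lessThan_double) (simp add: distrib_right)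
  also have "\<dots> = (g 0 False + g 0 True) * (\<Prod>j<n. g (Suc j) False + g (Suc j) True)"
    by (simp add: sum_distrib_left[symmetric] Suc.IH[of "\<lambda>j. g (Suc j)"])
  also have "\<dots> = (\<Prod>j<Suc n. g j False + g j True)"
    by (simp only: prod.lessThan_Suc_shift)
  finally show ?case .
qed simp

lemma smult_one_mat [simp]: "(1::'a::semiring_1) \<cdot>\<^sub>m M = M"
  by (rule eq_matI) auto

lemma smult_smult_mat [simp]: "(a::'a::semigroup_mult) \<cdot>\<^sub>m (b \<cdot>\<^sub>m M) = (a * b) \<cdot>\<^sub>m M"
  by (rule eq_matI) (auto simp: mult.assoc)

lemma pauli_mat_carrier [simp]: "pauli_mat n p \<in> carrier_mat (2^n) (2^n)"
  by (simp add: pauli_mat_def)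

lemma pauli_mat_dims [simp]: "dim_row (pauli_mat n p) = 2^n" "dim_col (pauli_mat n p) = 2^n"
  by (simp_all add: pauli_mat_def)

lemma pauli_mat_index:
  "r < 2^n \<Longrightarrow> c < 2^n \<Longrightarrow> pauli_mat n p $$ (r, c) = (\<Prod>q<n. pmat (p q) (bit r q) (bit c q))"
  by (simp add: pauli_mat_def)

lemma pauli_mat_truncate: "pauli_mat n (\<lambda>q. if q < n then p q else PI) = pauli_mat n p"
  unfolding pauli_mat_def by (intro cong_mat refl) (auto intro!: prod.cong)

lemma pauli_mat_mult:
  "pauli_mat n a * pauli_mat n b
     = (\<Prod>j<n. pauli_phase (a j) (b j)) \<cdot>\<^sub>m pauli_mat n (\<lambda>j. pmul1 (a j) (b j))"
proof (rule eq_matI)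
  fix r c assume "r < dim_row ((\<Prod>j<n. pauli_phase (a j) (b j)) \<cdot>\<^sub>m pauli_mat n (\<lambda>j. pmul1 (a j) (b j)))"
    and "c < dim_col ((\<Prod>j<n. pauli_phase (a j) (b j)) \<cdot>\<^sub>m pauli_mat n (\<lambda>j. pmul1 (a j) (b j)))"
  then have r: "r < 2^n" and c: "c < 2^n" by auto
  have "(pauli_mat n a * pauli_mat n b) $$ (r, c)
     = (\<Sum>k<2^n. \<Prod>q<n. pmat (a q) (bit r q) (bit (k::nat) q) * pmat (b q) (bit k q) (bit c q))"
    using r c by (simp add: scalar_prod_def pauli_mat_index atLeast0LessThan prod.distrib)
  also have "\<dots> = (\<Prod>q<n. pauli_phase (a q) (b q) * pmat (pmul1 (a q) (b q)) (bit r q) (bit c q))"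
    by (subst sum_bits_prod) (simp add: pmat_mult)
  finally show "(pauli_mat n a * pauli_mat n b) $$ (r, c) =
     ((\<Prod>j<n. pauli_phase (a j) (b j)) \<cdot>\<^sub>m pauli_mat n (\<lambda>j. pmul1 (a j) (b j))) $$ (r, c)"
    using r c by (simp add: prod.distrib pauli_mat_index)
qed auto

lemma pauli_mat_square: "pauli_mat n p * pauli_mat n p = pauli_mat n (\<lambda>_. PI)"
  by (simp add: pauli_mat_mult)

lemma pauli_mat_nonzero: "pauli_mat n p \<noteq> 0\<^sub>m (2^n) (2^n)"
proof
  assume "pauli_mat n p = 0\<^sub>m (2^n) (2^n)"
  then have "pauli_mat n (\<lambda>_. PI) = 0\<^sub>m (2^n) (2^n)"
    by (metis pauli_mat_square pauli_mat_carrier left_mult_zero_mat)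
  then have "pauli_mat n (\<lambda>_. PI) $$ (0, 0) = 0" by simp
  then show False by (simp add: pauli_mat_index)
qed

lemma pauli_mat_diag_sum:
  "(\<Sum>r<2^n. pauli_mat n p $$ (r, r)) = (\<Prod>j<n. pmat (p j) False False + pmat (p j) True True)"
  by (simp add: pauli_mat_index sum_bits_prod[where g = "\<lambda>j b. pmat (p j) b b"])

text \<open>Compare traces: the trace of a Pauli string is the product of the single-qubit traces,
  and only the identity has nonzero trace.\<close>
lemma smult_pauli_identity_eq_imp_PI:
  assumes "c \<noteq> 0" and eq: "c \<cdot>\<^sub>m pauli_mat n (\<lambda>_. PI) = d \<cdot>\<^sub>m pauli_mat n p" and "j < n"
  shows "p j = PI"
proof -
  have "(\<Sum>r<2^n. (c \<cdot>\<^sub>m pauli_mat n (\<lambda>_. PI)) $$ (r, r)) = (\<Sum>r<2^n. (d \<cdot>\<^sub>m pauli_mat n p) $$ (r, r))"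
    by (simp add: eq)
  then have "c * 2^n = d * (\<Prod>j<n. pmat (p j) False False + pmat (p j) True True)"
    by (simp add: sum_distrib_left[symmetric] pauli_mat_diag_sum del: pmat.simps)
      (simp add: pauli_mat_diag_sum[of n "\<lambda>_. PI", simplified])
  then have "(\<Prod>j<n. pmat (p j) False False + pmat (p j) True True) \<noteq> 0"
    using \<open>c \<noteq> 0\<close> by (metis mult_zero_right power_not_zero zero_neq_numeral no_zero_divisors)
  then show ?thesis
    using \<open>j < n\<close> by (auto simp: prod_zero_iff pmat_trace_eq_0_iff)
qed

lemma smult_pauli_mat_eq_imp_eq:
  assumes "c \<noteq> 0" and eq: "c \<cdot>\<^sub>m pauli_mat n a = d \<cdot>\<^sub>m pauli_mat n b" and "j < n"
  shows "a j = b j"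
proof -
  have "c \<cdot>\<^sub>m pauli_mat n (\<lambda>_. PI) = (c \<cdot>\<^sub>m pauli_mat n a) * pauli_mat n a"
    by (simp add: mult_smult_assoc_mat[OF pauli_mat_carrier pauli_mat_carrier] pauli_mat_square)
  also have "\<dots> = (d * (\<Prod>j<n. pauli_phase (b j) (a j))) \<cdot>\<^sub>m pauli_mat n (\<lambda>j. pmul1 (b j) (a j))"
    by (simp add: eq mult_smult_assoc_mat[OF pauli_mat_carrier pauli_mat_carrier] pauli_mat_mult)
  finally have "pmul1 (b j) (a j) = PI"
    using smult_pauli_identity_eq_imp_PI assms by blast
  then show ?thesis by (simp add: pmul1_eq_PI_iff)
qed

definition pauli_strings :: "nat \<Rightarrow> (nat \<Rightarrow> pauli1) set" where
  "pauli_strings n = {p. \<forall>q\<ge>n. p q = PI}"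

lemma finite_pauli_strings: "finite (pauli_strings n)"
proof -
  have univ: "(UNIV :: pauli1 set) = {PI, PX, PY, PZ}"
    using pauli1.exhaust by blast
  have "finite (UNIV :: pauli1 set)"
    by (subst univ) simp
  then have "finite {p. \<forall>q. (q \<in> {..<n} \<longrightarrow> p q \<in> (UNIV :: pauli1 set)) \<and> (q \<notin> {..<n} \<longrightarrow> p q = PI)}"
    by (intro finite_set_of_finite_funs) simp_all
  then show ?thesis
    by (simp add: pauli_strings_def not_less)
qed

lemma mult_smult_mult_mat:
  assumes "A \<in> carrier_mat N N" "M \<in> carrier_mat N N" "B \<in> carrier_mat N N"
  shows "A * (c \<cdot>\<^sub>m M) * B = (c::'a::comm_semiring_0) \<cdot>\<^sub>m (A * M * B)"
  using assms by (simp add: mult_smult_distrib mult_smult_assoc_mat[of _ N N])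

lemma smult_mult_smult_mat:
  assumes "M \<in> carrier_mat N N" "M' \<in> carrier_mat N N"
  shows "(a \<cdot>\<^sub>m M) * (b \<cdot>\<^sub>m M') = ((a::'a::comm_semiring_1) * b) \<cdot>\<^sub>m (M * M')"
  using assms by (simp add: mult_smult_distrib mult_smult_assoc_mat[OF _ smult_carrier_mat])

lemma mat_adjoint_carrier_mat: "A \<in> carrier_mat m k \<Longrightarrow> mat_adjoint A \<in> carrier_mat k m"
  unfolding mat_adjoint_def carrier_mat_def by auto

locale pauli_conjugation =
  fixes n :: nat and A B :: "complex mat"
  assumes A_carrier: "A \<in> carrier_mat (2^n) (2^n)"
    and B_carrier: "B \<in> carrier_mat (2^n) (2^n)"
    and left_inverse: "B * A = 1\<^sub>m (2^n)"
    and maps_paulis: "\<forall>p. \<exists>c p'. A * pauli_mat n p * B = c \<cdot>\<^sub>m pauli_mat n p'"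
begin

lemmas square_mat_assoc =
  assoc_mult_mat[of _ "2^n" "2^n" _ "2^n" _ "2^n"] mult_carrier_mat[of _ "2^n" "2^n" _ "2^n"]

lemma sandwich_cancel: "X \<in> carrier_mat (2^n) (2^n) \<Longrightarrow> B * (A * X * B) * A = X"
proof -
  assume X: "X \<in> carrier_mat (2^n) (2^n)"
  have "B * (A * X * B) * A = (B * A) * X * (B * A)"
    using A_carrier B_carrier X by (simp add: square_mat_assoc)
  then show ?thesis
    using left_inverse X by simp
qed

lemma sandwich_mult:
  assumes "X \<in> carrier_mat (2^n) (2^n)" "Y \<in> carrier_mat (2^n) (2^n)"
  shows "A * (X * Y) * B = (A * X * B) * (A * Y * B)"
proof -
  have "(A * X * B) * (A * Y * B) = A * X * (B * A) * Y * B"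
    using A_carrier B_carrier assms by (simp add: square_mat_assoc)
  then show ?thesis
    using left_inverse A_carrier B_carrier assms by (simp add: square_mat_assoc)
qed

lemma sandwich_cancel_smult: "B * (c \<cdot>\<^sub>m (A * pauli_mat n p * B)) * A = c \<cdot>\<^sub>m pauli_mat n p"
proof -
  have "A * pauli_mat n p * B \<in> carrier_mat (2^n) (2^n)"
    using A_carrier B_carrier pauli_mat_carrier by (meson mult_carrier_mat)
  then show ?thesis
    by (simp add: mult_smult_mult_mat[OF B_carrier _ A_carrier] sandwich_cancel)
qed

lemma conj_pauli_spec:
  "(\<forall>q\<ge>n. conj_pauli n A B p q = PI)
     \<and> (\<exists>c. A * pauli_mat n p * B = c \<cdot>\<^sub>m pauli_mat n (conj_pauli n A B p))"
proof -
  obtain c p' where "A * pauli_mat n p * B = c \<cdot>\<^sub>m pauli_mat n p'"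
    using maps_paulis by blast
  then have "\<exists>p'. (\<forall>q\<ge>n. p' q = PI) \<and> (\<exists>c. A * pauli_mat n p * B = c \<cdot>\<^sub>m pauli_mat n p')"
    by (intro exI[of _ "\<lambda>q. if q < n then p' q else PI"]) (auto simp: pauli_mat_truncate)
  then show ?thesis
    unfolding conj_pauli_def by (rule someI_ex)
qed

lemma conj_pauli_outside: "n \<le> q \<Longrightarrow> conj_pauli n A B p q = PI"
  using conj_pauli_spec by blast

lemma conj_pauli_in_pauli_strings: "conj_pauli n A B p \<in> pauli_strings n"
  by (simp add: pauli_strings_def conj_pauli_outside)

lemma conj_pauli_eq:
  obtains c where "A * pauli_mat n p * B = c \<cdot>\<^sub>m pauli_mat n (conj_pauli n A B p)"
  using conj_pauli_spec by blast

lemma conj_scalar_nonzero: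
  assumes "A * pauli_mat n p * B = c \<cdot>\<^sub>m pauli_mat n p'"
  shows "c \<noteq> 0"
proof
  assume "c = 0"
  then have "A * pauli_mat n p * B = 0\<^sub>m (2^n) (2^n)"
    using assms by (auto intro!: eq_matI)
  then have "pauli_mat n p = B * 0\<^sub>m (2^n) (2^n) * A"
    using sandwich_cancel[of "pauli_mat n p"] by simp
  also have "\<dots> = 0\<^sub>m (2^n) (2^n)"
    using A_carrier B_carrier by simp
  finally show False
    using pauli_mat_nonzero by blast
qed

lemma conj_pauli_mult:
  "conj_pauli n A B (\<lambda>q. pmul1 (a q) (b q))
     = (\<lambda>q. pmul1 (conj_pauli n A B a q) (conj_pauli n A B b q))"
proof
  fix q
  let ?\<phi> = "conj_pauli n A B" and ?ab = "\<lambda>q. pmul1 (a q) (b q)"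
  show "?\<phi> ?ab q = pmul1 (?\<phi> a q) (?\<phi> b q)"
  proof (cases "q < n")
    case False
    then show ?thesis by (simp add: conj_pauli_outside)
  next
    case True
    obtain ca where ca: "A * pauli_mat n a * B = ca \<cdot>\<^sub>m pauli_mat n (?\<phi> a)"
      using conj_pauli_eq .
    obtain cb where cb: "A * pauli_mat n b * B = cb \<cdot>\<^sub>m pauli_mat n (?\<phi> b)"
      using conj_pauli_eq .
    obtain cab where cab: "A * pauli_mat n ?ab * B = cab \<cdot>\<^sub>m pauli_mat n (?\<phi> ?ab)"
      using conj_pauli_eq .
    define \<omega> where "\<omega> = (\<Prod>j<n. pauli_phase (a j) (b j))"
    define \<omega>' where "\<omega>' = (\<Prod>j<n. pauli_phase (?\<phi> a j) (?\<phi> b j))"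
    have "(\<omega> * cab) \<cdot>\<^sub>m pauli_mat n (?\<phi> ?ab) = A * (pauli_mat n a * pauli_mat n b) * B"
      using A_carrier B_carrier
      by (simp add: pauli_mat_mult mult_smult_mult_mat cab \<omega>_def)
    also have "\<dots> = (A * pauli_mat n a * B) * (A * pauli_mat n b * B)"
      by (simp add: sandwich_mult)
    also have "\<dots> = (ca * cb * \<omega>') \<cdot>\<^sub>m pauli_mat n (\<lambda>j. pmul1 (?\<phi> a j) (?\<phi> b j))"
      by (simp add: ca cb smult_mult_smult_mat[of _ "2^n"] pauli_mat_mult \<omega>'_def)
    finally have "(\<omega> * cab) \<cdot>\<^sub>m pauli_mat n (?\<phi> ?ab)
      = (ca * cb * \<omega>') \<cdot>\<^sub>m pauli_mat n (\<lambda>j. pmul1 (?\<phi> a j) (?\<phi> b j))" .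
    moreover have "\<omega> * cab \<noteq> 0"
      using conj_scalar_nonzero[OF cab] by (simp add: \<omega>_def)
    ultimately show ?thesis
      using smult_pauli_mat_eq_imp_eq True by blast
  qed
qed

lemma inj_on_conj_pauli: "inj_on (conj_pauli n A B) (pauli_strings n)"
proof (rule inj_onI)
  fix a b
  assume a: "a \<in> pauli_strings n" and b: "b \<in> pauli_strings n"
    and eq: "conj_pauli n A B a = conj_pauli n A B b"
  obtain ca where ca: "A * pauli_mat n a * B = ca \<cdot>\<^sub>m pauli_mat n (conj_pauli n A B a)"
    using conj_pauli_eq .
  obtain cb where cb: "A * pauli_mat n b * B = cb \<cdot>\<^sub>m pauli_mat n (conj_pauli n A B a)"
    using conj_pauli_eq[of b] unfolding eq .
  have "cb \<cdot>\<^sub>m pauli_mat n a = B * (cb \<cdot>\<^sub>m (A * pauli_mat n a * B)) * A"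
    by (simp add: sandwich_cancel_smult)
  also have "\<dots> = B * (ca \<cdot>\<^sub>m (A * pauli_mat n b * B)) * A"
    by (simp add: ca cb mult.commute)
  also have "\<dots> = ca \<cdot>\<^sub>m pauli_mat n b"
    by (simp add: sandwich_cancel_smult)
  finally have "a q = b q" if "q < n" for q
    using smult_pauli_mat_eq_imp_eq[OF conj_scalar_nonzero[OF cb] _ that] by blast
  moreover have "a q = b q" if "n \<le> q" for q
    using a b that by (simp add: pauli_strings_def)
  ultimately show "a = b"
    by (meson ext not_less)
qed

lemma conj_pauli_image: "conj_pauli n A B ` pauli_strings n = pauli_strings n"
  by (rule endo_inj_surj[OF finite_pauli_strings _ inj_on_conj_pauli])
    (auto intro: conj_pauli_in_pauli_strings)

end

lemma clifford_conjugation: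
  assumes "clifford n U"
  shows "pauli_conjugation n U (mat_adjoint U)"
  using assms by unfold_locales (auto simp: clifford_def intro: mat_adjoint_carrier_mat)

text \<open>Conjugation by U is injective on the finitely many Pauli classes, hence onto them;
  so every Pauli is, up to a phase, U P U^-1 for some Pauli P, and U^-1 maps it back to P.\<close>
lemma clifford_inverse_conjugation:
  assumes "clifford n U"
  shows "pauli_conjugation n (mat_adjoint U) U"
proof -
  interpret pauli_conjugation n U "mat_adjoint U"
    using assms by (rule clifford_conjugation)
  have "\<exists>c p'. mat_adjoint U * pauli_mat n p * U = c \<cdot>\<^sub>m pauli_mat n p'" for p
  proof -
    define p\<^sub>0 where "p\<^sub>0 = (\<lambda>q. if q < n then p q else PI)"
    have "p\<^sub>0 \<in> pauli_strings n"
      by (simp add: pauli_strings_def p\<^sub>0_def)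
    then have "p\<^sub>0 \<in> conj_pauli n U (mat_adjoint U) ` pauli_strings n"
      unfolding conj_pauli_image .
    then obtain a where a: "conj_pauli n U (mat_adjoint U) a = p\<^sub>0"
      by blast
    obtain c where "U * pauli_mat n a * mat_adjoint U = c \<cdot>\<^sub>m pauli_mat n (conj_pauli n U (mat_adjoint U) a)"
      by (rule conj_pauli_eq)
    then have c: "U * pauli_mat n a * mat_adjoint U = c \<cdot>\<^sub>m pauli_mat n p"
      by (simp add: a p\<^sub>0_def pauli_mat_truncate)
    have "c \<cdot>\<^sub>m (mat_adjoint U * pauli_mat n p * U) = mat_adjoint U * (c \<cdot>\<^sub>m pauli_mat n p) * U"
      by (simp add: mult_smult_mult_mat[OF B_carrier _ A_carrier])
    also have "\<dots> = pauli_mat n a"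
      by (simp add: c[symmetric] sandwich_cancel)
    finally have "(1 / c) \<cdot>\<^sub>m pauli_mat n a = (1 / c) \<cdot>\<^sub>m (c \<cdot>\<^sub>m (mat_adjoint U * pauli_mat n p * U))"
      by simp
    also have "\<dots> = mat_adjoint U * pauli_mat n p * U"
      using conj_scalar_nonzero[OF c] by simp
    finally show ?thesis by metis
  qed
  then show ?thesis
    using assms by unfold_locales (auto simp: clifford_def intro: mat_adjoint_carrier_mat)
qed

definition transvection ::
    "nat \<Rightarrow> nat \<Rightarrow> ((nat \<Rightarrow> pauli1) \<Rightarrow> nat \<Rightarrow> pauli1) \<Rightarrow> (nat \<Rightarrow> nat \<Rightarrow> pauli1) \<Rightarrow> nat \<Rightarrow> nat \<Rightarrow> pauli1"
  where "transvection i j \<phi> G = G(i := (\<lambda>q. pmul1 (G i q) (\<phi> (G j) q)))"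

lemma transvection_involutive: "i \<noteq> j \<Longrightarrow> transvection i j \<phi> (transvection i j \<phi> G) = G"
  by (simp add: transvection_def fun_eq_iff)

lemma transvection_iso:
  assumes "i \<le> \<Delta>" "i \<noteq> j"
    and mult: "\<And>a b. \<phi> (\<lambda>q. pmul1 (a q) (b q)) = (\<lambda>q. pmul1 (\<phi> a q) (\<phi> b q))"
    and outside: "\<And>a q. n \<le> q \<Longrightarrow> \<phi> a q = PI"
  shows "transvection i j \<phi> \<in> iso (fault_group n \<Delta>) (fault_group n \<Delta>)"
proof (rule isoI)
  have closed: "transvection i j \<phi> G \<in> carrier (fault_group n \<Delta>)"
    if "G \<in> carrier (fault_group n \<Delta>)" for G
    using that \<open>i \<le> \<Delta>\<close> outside by (auto simp: fault_group_def transvection_def)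
  show "transvection i j \<phi> \<in> hom (fault_group n \<Delta>) (fault_group n \<Delta>)"
    by (rule homI)
      (use closed \<open>i \<noteq> j\<close> in \<open>auto simp: fault_group_def transvection_def mult pmul1_exchange\<close>)
  show "bij_betw (transvection i j \<phi>) (carrier (fault_group n \<Delta>)) (carrier (fault_group n \<Delta>))"
    by (rule bij_betw_byWitness[where f' = "transvection i j \<phi>"])
      (use closed transvection_involutive[OF \<open>i \<noteq> j\<close>] in auto)
qed

lemma (in pauli_conjugation) transvection_conj_pauli_iso:
  "i \<le> \<Delta> \<Longrightarrow> i \<noteq> j \<Longrightarrow> transvection i j (conj_pauli n A B) \<in> iso (fault_group n \<Delta>) (fault_group n \<Delta>)"
  by (rule transvection_iso) (simp_all add: conj_pauli_mult conj_pauli_outside)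

lemma cumulant_steps_Suc:
  "cumulant_steps n U F (Suc k)
     = transvection (Suc k) k (conj_pauli n (U (Suc k)) (mat_adjoint (U (Suc k)))) (cumulant_steps n U F k)"
  by (simp add: transvection_def Let_def)

lemma back_steps_Suc:
  "back_steps n \<Delta> U F (Suc k)
     = transvection (\<Delta> - k - 1) (\<Delta> - k) (conj_pauli n (mat_adjoint (U (\<Delta> - k))) (U (\<Delta> - k)))
         (back_steps n \<Delta> U F k)"
  by (simp add: transvection_def Let_def)

lemma cumulant_steps_iso:
  assumes "\<forall>l\<in>{1..\<Delta>}. clifford n (U l)" and "k \<le> \<Delta>"
  shows "(\<lambda>F. cumulant_steps n U F k) \<in> iso (fault_group n \<Delta>) (fault_group n \<Delta>)"
  using \<open>k \<le> \<Delta>\<close>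
proof (induction k)
  case 0
  show ?case using iso_set_refl by simp
next
  case (Suc k)
  interpret pauli_conjugation n "U (Suc k)" "mat_adjoint (U (Suc k))"
    using assms(1) Suc.prems by (intro clifford_conjugation) simp
  have "(\<lambda>F. cumulant_steps n U F (Suc k))
      = transvection (Suc k) k (conj_pauli n (U (Suc k)) (mat_adjoint (U (Suc k))))
          \<circ> (\<lambda>F. cumulant_steps n U F k)"
    by (simp add: fun_eq_iff cumulant_steps_Suc del: cumulant_steps.simps)
  then show ?case
    using iso_set_trans[OF Suc.IH transvection_conj_pauli_iso] Suc.prems by simp
qed

lemma back_steps_iso:
  assumes "\<forall>l\<in>{1..\<Delta>}. clifford n (U l)" and "k \<le> \<Delta>"
  shows "(\<lambda>F. back_steps n \<Delta> U F k) \<in> iso (fault_group n \<Delta>) (fault_group n \<Delta>)"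
  using \<open>k \<le> \<Delta>\<close>
proof (induction k)
  case 0
  show ?case using iso_set_refl by simp
next
  case (Suc k)
  interpret pauli_conjugation n "mat_adjoint (U (\<Delta> - k))" "U (\<Delta> - k)"
    using assms(1) Suc.prems by (intro clifford_inverse_conjugation) simp
  have "(\<lambda>F. back_steps n \<Delta> U F (Suc k))
      = transvection (\<Delta> - k - 1) (\<Delta> - k) (conj_pauli n (mat_adjoint (U (\<Delta> - k))) (U (\<Delta> - k)))
          \<circ> (\<lambda>F. back_steps n \<Delta> U F k)"
    by (simp add: fun_eq_iff back_steps_Suc del: back_steps.simps)
  then show ?case
    using iso_set_trans[OF Suc.IH transvection_conj_pauli_iso] Suc.prems by simp
qed

theorem mainTheorem7:
  fixes n \<Delta> :: nat and U :: "nat \<Rightarrow> complex mat"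
  assumes "\<forall>l\<in>{1..\<Delta>}. clifford n (U l)"
  shows "cumulant n \<Delta> U \<in> iso (fault_group n \<Delta>) (fault_group n \<Delta>)
       \<and> back_cumulant n \<Delta> U \<in> iso (fault_group n \<Delta>) (fault_group n \<Delta>)"
proof -
  have "cumulant n \<Delta> U = (\<lambda>F. cumulant_steps n U F \<Delta>)"
    by (simp add: fun_eq_iff cumulant_def)
  moreover have "back_cumulant n \<Delta> U = (\<lambda>F. back_steps n \<Delta> U F \<Delta>)"
    by (simp add: fun_eq_iff back_cumulant_def)
  ultimately show ?thesis
    using cumulant_steps_iso[OF assms] back_steps_iso[OF assms] by simp
qed

end
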